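(* There is an absolute constant $C_1$ such that for all $p\in(0,0.1)$, with $q=-\log(1-p)$, $A=\lceil 1/\sqrt q\rceil$, $B=\lfloor q^{-1}\log q^{-1}\rfloor$, $$\int_{Aq}^{Bq} g(z)\,dz\ge \frac{\pi^2}{18}-C_1\sqrt q\,\log q^{-1}.$$
   Context: $\beta(u)=\frac{u+\sqrt{u(4-3u)}}{2}$ and $g(z)=-\log\beta(1-e^{-z})$ for $z>0$. *)

theory Defs
  imports "HOL-Analysis.Analysis"
begin

definition beta :: "real \<Rightarrow> real" where
  "beta u = (u + sqrt (u * (4 - 3 * u))) / 2"

definition g :: "real \<Rightarrow> real" where
  "g z = - ln (beta (1 - exp (- z)))"

end

theory Submission
  imports Defs "HOL-Real_Asymp.Real_Asymp"
begin

text \<open>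
  Substitute \<open>z = \<zeta>(s) = ln ((1 - s + s\<^sup>2) / (1 - s))\<close>, an increasing bijection from
  \<open>(0, 1)\<close> onto \<open>(0, \<infinity>)\<close>. Then \<open>1 - e\<^sup>-\<^sup>z = s\<^sup>2 / (1 - s + s\<^sup>2)\<close>, the square root in
  \<open>\<beta>\<close> becomes rational, \<open>\<beta>(1 - e\<^sup>-\<^sup>z) = s / (1 - s + s\<^sup>2)\<close>, and
  \<open>g (\<zeta> s) = ln ((1 - s + s\<^sup>2) / s)\<close>. The transformed integrand \<open>g (\<zeta> s) \<zeta>'(s)\<close> has an
  explicit antiderivative \<open>\<Psi>\<close> built from the dilogarithm, and \<open>\<Psi>(1) - \<Psi>(0) = \<pi>\<^sup>2/18\<close> by
  \<open>Li\<^sub>2(1) = \<pi>\<^sup>2/6\<close> and \<open>Li\<^sub>2(-1) = -\<pi>\<^sup>2/12\<close>.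

  The endpoint \<open>Aq \<approx> \<surd>q\<close> corresponds to a parameter \<open>s\<close> with \<open>s\<^sup>2 \<approx> \<surd>q\<close>, and there
  \<open>\<Psi>' \<le> -10 s ln s\<close> bounds the missing piece by \<open>O(\<surd>q ln (1/q))\<close>; the endpoint
  \<open>Bq \<ge> ln (1/q) - q\<close> corresponds to \<open>1 - s \<le> e\<^sup>-\<^sup>B\<^sup>q = O(q)\<close>, and there \<open>\<Psi>' \<le> 5\<close>.
\<close>

definition Li2 :: "real \<Rightarrow> real" where
  "Li2 x = (\<Sum>n. (1 / (real n)\<^sup>2) * x ^ n)"
  \<comment> \<open>the \<open>n = 0\<close> term vanishes because \<open>1 / 0 = 0\<close>\<close>

lemma summable_inverse_square_nat: "summable (\<lambda>n. 1 / (real n)\<^sup>2 :: real)"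
proof -
  have "summable (\<lambda>n. 1 / (real (Suc n))\<^sup>2 :: real)"
    using inverse_squares_sums by (simp add: sums_summable add.commute)
  then show ?thesis by (subst summable_Suc_iff[symmetric])
qed

lemma inverse_square_nat_sums: "(\<lambda>n. 1 / (real n)\<^sup>2) sums (pi\<^sup>2 / 6)"
proof -
  have "(\<lambda>n. 1 / (real (Suc n))\<^sup>2) sums (pi\<^sup>2 / 6)"
    using inverse_squares_sums by (simp add: add.commute)
  then show ?thesis by (subst (asm) sums_Suc_iff) simp
qed

lemma continuous_on_Li2: "continuous_on {-1..1} Li2"
proof -
  have lim: "uniform_limit {-1..1} (\<lambda>n x. \<Sum>i<n. (1 / (real i)\<^sup>2) * x ^ i) Li2 sequentially"
    unfolding Li2_def[abs_def]
  proof (rule Weierstrass_m_test[OF _ summable_inverse_square_nat])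
    fix n and x :: real
    assume "x \<in> {-1..1}"
    then have "\<bar>x\<bar> ^ n \<le> 1" by (intro power_le_one) auto
    then show "norm ((1 / (real n)\<^sup>2) * x ^ n) \<le> 1 / (real n)\<^sup>2"
      by (simp add: abs_mult power_abs divide_le_eq mult_le_cancel_left1)
  qed
  show ?thesis
    by (rule uniform_limit_theorem[OF _ lim], rule always_eventually, intro allI continuous_intros) simp
qed

lemma Li2_0 [simp]: "Li2 0 = 0"
proof -
  have "(\<lambda>n. (1 / (real n)\<^sup>2) * (0::real) ^ n) = (\<lambda>n. 0)"
    by (rule ext) (simp add: power_0_left)
  then show ?thesis unfolding Li2_def by simp
qed

lemma Li2_1: "Li2 1 = pi\<^sup>2 / 6"
  using inverse_square_nat_sums by (simp add: Li2_def sums_iff)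

lemma Li2_minus_1: "Li2 (-1) = - (pi\<^sup>2 / 12)"
proof -
  define c where "c k = (1 / (real k)\<^sup>2) * (1 + (-1) ^ k :: real)" for k
  \<comment> \<open>\<open>c\<close> lives on the even numbers, where it is twice the reindexed series \<open>\<Sum> 1/(2n)\<^sup>2 = \<pi>\<^sup>2/24\<close>\<close>
  have "(\<lambda>n. 2 * (1 / 4 * (1 / (real n)\<^sup>2))) sums (2 * (1 / 4 * (pi\<^sup>2 / 6)))"
    by (intro sums_mult inverse_square_nat_sums)
  then have "(\<lambda>n. c (2 * n)) sums (pi\<^sup>2 / 12)"
    by (simp add: c_def power_mult_distrib)
  moreover have "c k = 0" if "k \<notin> range (\<lambda>n. 2 * n)" for k
  proof -
    from that have "odd k" by (metis evenE rangeI)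
    then show ?thesis by (simp add: c_def)
  qed
  ultimately have "c sums (pi\<^sup>2 / 12)"
    using sums_mono_reindex[of "\<lambda>n. 2 * n" c] by (simp add: strict_mono_def)
  from sums_diff[OF this inverse_square_nat_sums]
  have "(\<lambda>k. (1 / (real k)\<^sup>2) * (-1) ^ k) sums (pi\<^sup>2 / 12 - pi\<^sup>2 / 6)"
    by (simp add: c_def diff_divide_distrib[symmetric] add_divide_distrib)
  then show ?thesis unfolding Li2_def by (simp add: sums_iff)
qed

lemma DERIV_Li2:
  assumes "\<bar>x\<bar> < 1" "x \<noteq> 0"
  shows "(Li2 has_real_derivative (- ln (1 - x) / x)) (at x)"
proof -
  have d: "(Li2 has_real_derivative (\<Sum>n. diffs (\<lambda>n. 1 / (real n)\<^sup>2) n * x ^ n)) (at x)"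
    unfolding Li2_def
    by (rule termdiffs_strong[where K=1]) (use summable_inverse_square_nat assms in auto)
  have "ln (1 - x) = (\<Sum>n. (-1) ^ n * (1 / real (n + 1)) * ((1 - x) - 1) ^ Suc n)"
    by (rule ln_series) (use assms in auto)
  also have "\<dots> = (\<Sum>n. - (x * (x ^ n / real (Suc n))))"
    by (rule suminf_cong) (simp add: power_minus' algebra_simps)
  finally have ln_sum: "ln (1 - x) = (\<Sum>n. - (x * (x ^ n / real (Suc n))))" .
  have sm: "summable (\<lambda>n. x ^ n / real (Suc n))"
  proof (rule summable_comparison_test[where g="\<lambda>n. \<bar>x\<bar> ^ n"])
    show "\<exists>N. \<forall>n\<ge>N. norm (x ^ n / real (Suc n)) \<le> \<bar>x\<bar> ^ n"
      by (auto simp: abs_mult power_abs divide_le_eq intro!: mult_le_cancel_left1[THEN iffD2])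
    show "summable (\<lambda>n. \<bar>x\<bar> ^ n)" using assms by (simp add: summable_geometric)
  qed
  have "ln (1 - x) = - x * (\<Sum>n. x ^ n / real (Suc n))"
    unfolding ln_sum using suminf_minus[OF summable_mult[OF sm, of x]] suminf_mult[OF sm, of x]
    by simp
  moreover have "(\<Sum>n. diffs (\<lambda>n. 1 / (real n)\<^sup>2) n * x ^ n) = (\<Sum>n. x ^ n / real (Suc n))"
    by (rule suminf_cong) (simp add: diffs_def power2_eq_square)
  ultimately show ?thesis using d assms by simp
qed


definition lnQ :: "real \<Rightarrow> real" where
  "lnQ s = ln (1 - s + s\<^sup>2)"

definition zeta :: "real \<Rightarrow> real" where
  "zeta s = lnQ s - ln (1 - s)"

definition zeta' :: "real \<Rightarrow> real" where
  "zeta' s = s * (2 - s) / ((1 - s + s\<^sup>2) * (1 - s))"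

definition Phi :: "real \<Rightarrow> real" where
  "Phi s = Li2 (- s) - Li2 (- (s ^ 3)) / 3"
  \<comment> \<open>\<open>Phi' s = lnQ s / s\<close>, because \<open>1 - s + s\<^sup>2 = (1 + s\<^sup>3) / (1 + s)\<close>\<close>

definition Psi :: "real \<Rightarrow> real" where
  "Psi s = (lnQ s)\<^sup>2 / 2 - lnQ s * ln s + ln s * ln (1 - s) + Phi s - Phi (1 - s) + Li2 s"

lemma one_minus_add_square_pos: "0 < 1 - s + (s::real)\<^sup>2"
proof -
  have "1 - s + s\<^sup>2 = (s - 1/2)\<^sup>2 + 3/4" by (simp add: power2_eq_square algebra_simps)
  then show ?thesis using zero_le_power2[of "s - 1/2"] by linarith
qed

lemma lnQ_one_minus: "lnQ (1 - s) = lnQ s"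
  unfolding lnQ_def by (simp add: algebra_simps power2_eq_square)

lemma lnQ_nonpos: assumes "0 \<le> s" "s \<le> 1" shows "lnQ s \<le> 0"
proof -
  have "s * s \<le> s * 1" using assms by (intro mult_left_mono) auto
  then show ?thesis
    unfolding lnQ_def using one_minus_add_square_pos[of s] by (simp add: power2_eq_square)
qed

lemma DERIV_lnQ: "(lnQ has_real_derivative (2 * s - 1) / (1 - s + s\<^sup>2)) (at s)"
  unfolding lnQ_def using one_minus_add_square_pos[of s]
  by (auto intro!: derivative_eq_intros simp: power2_eq_square)

lemma DERIV_Phi:
  assumes "0 < s" "s < 1"
  shows "(Phi has_real_derivative lnQ s / s) (at s)"
proof -
  have s3: "0 < s ^ 3" "s ^ 3 < 1" using assms by (auto simp: power_less_one_iff)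
  have d1: "((\<lambda>x. Li2 (- x)) has_real_derivative (- ln (1 - (- s)) / (- s)) * (-1)) (at s)"
    by (rule DERIV_chain2[OF DERIV_Li2]) (use assms in \<open>auto intro!: derivative_eq_intros\<close>)
  have d2: "((\<lambda>x. Li2 (- (x ^ 3))) has_real_derivative
      (- ln (1 - (- (s ^ 3))) / (- (s ^ 3))) * (- (3 * s\<^sup>2))) (at s)"
    by (rule DERIV_chain2[OF DERIV_Li2]) (use assms s3 in \<open>auto intro!: derivative_eq_intros\<close>)
  have "(Phi has_real_derivative (- ln (1 - (- s)) / (- s)) * (-1)
      - (- ln (1 - (- (s ^ 3))) / (- (s ^ 3))) * (- (3 * s\<^sup>2)) / 3) (at s)"
    unfolding Phi_def[abs_def] by (intro DERIV_diff d1 DERIV_cdivide d2)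
  moreover have "1 + s ^ 3 = (1 + s) * (1 - s + s\<^sup>2)"
    by (simp add: algebra_simps power2_eq_square power3_eq_cube)
  then have "lnQ s = ln (1 + s ^ 3) - ln (1 + s)"
    unfolding lnQ_def using assms one_minus_add_square_pos[of s] by (simp add: ln_mult)
  then have "(- ln (1 - (- s)) / (- s)) * (-1)
      - (- ln (1 - (- (s ^ 3))) / (- (s ^ 3))) * (- (3 * s\<^sup>2)) / 3 = lnQ s / s"
    using assms by (simp add: field_simps power2_eq_square power3_eq_cube)
  ultimately show ?thesis by simp
qed

lemma DERIV_Psi:
  assumes "0 < s" "s < 1"
  shows "(Psi has_real_derivative (lnQ s - ln s) * zeta' s) (at s)"
proof -
  define d where "d = 1 - s + s\<^sup>2"
  have d: "0 < d" unfolding d_def by (rule one_minus_add_square_pos)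
  have dQ: "(lnQ has_real_derivative (2 * s - 1) / d) (at s)"
    unfolding d_def by (rule DERIV_lnQ)
  have dsq: "((\<lambda>x. (lnQ x)\<^sup>2 / 2) has_real_derivative lnQ s * ((2 * s - 1) / d)) (at s)"
    using DERIV_cdivide[OF DERIV_chain2[OF DERIV_pow[of 2] dQ], of 2]
    by (rule DERIV_cong) simp
  have dQln: "((\<lambda>x. lnQ x * ln x) has_real_derivative
      (2 * s - 1) / d * ln s + lnQ s * (1 / s)) (at s)"
    using DERIV_mult[OF dQ DERIV_ln_divide[OF assms(1)]] by (rule DERIV_cong) (simp add: algebra_simps)
  have dlnln: "((\<lambda>x. ln x * ln (1 - x)) has_real_derivative
      (1 / s) * ln (1 - s) + ln s * (-1 / (1 - s))) (at s)"
    using assms by (auto intro!: derivative_eq_intros)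
  have dPhi1: "((\<lambda>x. Phi (1 - x)) has_real_derivative (lnQ (1 - s) / (1 - s)) * (-1)) (at s)"
    by (rule DERIV_chain2[OF DERIV_Phi]) (use assms in \<open>auto intro!: derivative_eq_intros\<close>)
  have "(Psi has_real_derivative
      lnQ s * ((2 * s - 1) / d) - ((2 * s - 1) / d * ln s + lnQ s * (1 / s))
      + ((1 / s) * ln (1 - s) + ln s * (-1 / (1 - s))) + lnQ s / s
      - (lnQ (1 - s) / (1 - s)) * (-1) + (- ln (1 - s) / s)) (at s)"
    unfolding Psi_def[abs_def]
    using assms by (intro DERIV_add DERIV_diff dsq dQln dlnln DERIV_Phi dPhi1 DERIV_Li2) auto
  moreover
  have "(2 * s - 1) / d + 1 / (1 - s) = zeta' s"
  proof -
    have "(2 * s - 1) / d + 1 / (1 - s) = ((2 * s - 1) * (1 - s) + d) / (d * (1 - s))"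
      using assms d by (simp add: field_simps)
    also have "(2 * s - 1) * (1 - s) + d = s * (2 - s)"
      unfolding d_def by (simp add: algebra_simps power2_eq_square)
    finally show ?thesis unfolding zeta'_def d_def .
  qed
  moreover have "lnQ s * ((2 * s - 1) / d) - ((2 * s - 1) / d * ln s + lnQ s * (1 / s))
      + ((1 / s) * ln (1 - s) + ln s * (-1 / (1 - s))) + lnQ s / s
      - (lnQ (1 - s) / (1 - s)) * (-1) + (- ln (1 - s) / s)
      = (lnQ s - ln s) * ((2 * s - 1) / d + 1 / (1 - s))"
    unfolding lnQ_one_minus divide_inverse by algebra
  ultimately show ?thesis by simp
qed


lemma g_zeta:
  assumes "0 < s" "s < 1"
  shows "g (zeta s) = lnQ s - ln s"
proof -
  define d where "d = 1 - s + s\<^sup>2"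
  have d: "0 < d" unfolding d_def by (rule one_minus_add_square_pos)
  have "zeta s = ln (d / (1 - s))"
    unfolding zeta_def lnQ_def d_def using assms one_minus_add_square_pos[of s] by (simp add: ln_div)
  then have "exp (- zeta s) = (1 - s) / d"
    using d assms by (simp add: exp_minus exp_ln)
  then have u: "1 - exp (- zeta s) = s\<^sup>2 / d"
    using d by (simp add: field_simps d_def)
  have "s\<^sup>2 / d * (4 - 3 * (s\<^sup>2 / d)) = (s\<^sup>2 * (4 * d - 3 * s\<^sup>2)) / d\<^sup>2"
    using d by (simp add: field_simps power2_eq_square)
  also have "4 * d - 3 * s\<^sup>2 = (2 - s)\<^sup>2"
    unfolding d_def by (simp add: algebra_simps power2_eq_square)
  also have "s\<^sup>2 * (2 - s)\<^sup>2 / d\<^sup>2 = (s * (2 - s) / d)\<^sup>2"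
    by (simp add: power_mult_distrib power_divide)
  finally have "sqrt (s\<^sup>2 / d * (4 - 3 * (s\<^sup>2 / d))) = s * (2 - s) / d"
    using assms d by simp
  then have "beta (1 - exp (- zeta s)) = s / d"
    unfolding beta_def u using d by (simp add: field_simps power2_eq_square)
  then show ?thesis
    unfolding g_def lnQ_def d_def[symmetric] using assms d by (simp add: ln_div)
qed

lemma zeta_eq_ln:
  assumes "s < 1"
  shows "zeta s = ln (1 + s\<^sup>2 / (1 - s))"
proof -
  have "1 + s\<^sup>2 / (1 - s) = (1 - s + s\<^sup>2) / (1 - s)" using assms by (simp add: field_simps)
  then show ?thesis
    unfolding zeta_def lnQ_def using assms one_minus_add_square_pos[of s] by (simp add: ln_div)
qed

lemma zeta_0 [simp]: "zeta 0 = 0"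
  by (simp add: zeta_def lnQ_def)

lemma zeta_less:
  assumes "0 \<le> s" "s < t" "t < 1"
  shows "zeta s < zeta t"
proof -
  have "s\<^sup>2 / (1 - s) \<le> s\<^sup>2 / (1 - t)" using assms by (intro divide_left_mono) auto
  also have "\<dots> < t\<^sup>2 / (1 - t)" using assms by (intro divide_strict_right_mono power_strict_mono) auto
  finally have "s\<^sup>2 / (1 - s) < t\<^sup>2 / (1 - t)" .
  moreover have "0 < 1 + s\<^sup>2 / (1 - s)" using assms by (intro add_pos_nonneg) auto
  ultimately show ?thesis using assms by (simp add: zeta_eq_ln)
qed

lemma zeta_le_iff:
  assumes "0 \<le> s" "s < 1" "0 \<le> t" "t < 1"
  shows "zeta s \<le> zeta t \<longleftrightarrow> s \<le> t"
  using zeta_less[of s t] zeta_less[of t s] assms by (cases s t rule: linorder_cases) auto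

lemma zeta_pos: "0 < s \<Longrightarrow> s < 1 \<Longrightarrow> 0 < zeta s"
  using zeta_less[of 0 s] by simp

lemma DERIV_zeta:
  assumes "0 < s" "s < 1"
  shows "(zeta has_real_derivative zeta' s) (at s)"
proof -
  have "(zeta has_real_derivative (2 * s - 1) / (1 - s + s\<^sup>2) - (-1 / (1 - s))) (at s)"
    unfolding zeta_def[abs_def] using assms
    by (intro DERIV_diff DERIV_lnQ) (auto intro!: derivative_eq_intros)
  moreover have "(2 * s - 1) / (1 - s + s\<^sup>2) - (-1 / (1 - s))
      = ((2 * s - 1) * (1 - s) + (1 - s + s\<^sup>2)) / ((1 - s + s\<^sup>2) * (1 - s))"
    using assms one_minus_add_square_pos[of s] by (simp add: field_simps)
  moreover have "(2 * s - 1) * (1 - s) + (1 - s + s\<^sup>2) = s * (2 - s)"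
    by (simp add: algebra_simps power2_eq_square)
  ultimately show ?thesis unfolding zeta'_def by simp
qed

lemma continuous_on_zeta: "t < 1 \<Longrightarrow> continuous_on {0..t} zeta"
  unfolding zeta_def[abs_def] lnQ_def using one_minus_add_square_pos
  by (intro continuous_intros) (auto simp: less_le)

lemma continuous_on_g: "continuous_on {0<..} g"
proof -
  have "0 < 1 - exp (- z) \<and> 1 - exp (- z) \<le> 1" if "0 < z" for z :: real
    using that by auto
  moreover have "0 < beta u" if "0 < u" "u \<le> 1" for u
    using that by (simp add: beta_def add_pos_nonneg)
  ultimately show ?thesis
    unfolding g_def[abs_def] beta_def
    by (intro continuous_intros) (fastforce simp: beta_def intro!: mult_nonneg_nonneg)+
qed

lemma integral_g_zeta:
  assumes "0 < s1" "s1 \<le> s2" "s2 < 1"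
  shows "integral {zeta s1..zeta s2} g = Psi s2 - Psi s1"
proof -
  have zeta_mono: "zeta x \<in> {zeta s1..zeta s2}" if "x \<in> {s1..s2}" for x
    using that assms zeta_le_iff[of s1 x] zeta_le_iff[of x s2] by auto
  have "((\<lambda>x. zeta' x *\<^sub>R g (zeta x)) has_integral integral {zeta s1..zeta s2} g) {s1..s2}"
  proof (rule has_integral_substitution[where f=g and g=zeta and g'=zeta' and c="zeta s1" and d="zeta s2"])
    show "continuous_on {zeta s1..zeta s2} g"
      by (rule continuous_on_subset[OF continuous_on_g]) (use zeta_pos[of s1] assms in auto)
    show "(zeta has_real_derivative zeta' x) (at x within {s1..s2})" if "x \<in> {s1..s2}" for x
      using that assms by (auto intro!: has_field_derivative_at_within[OF DERIV_zeta])
    show "zeta ` {s1..s2} \<subseteq> {zeta s1..zeta s2}"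
      using zeta_mono by blast
  qed (use assms zeta_mono[of s2] in auto)
  moreover have "((\<lambda>x. zeta' x *\<^sub>R g (zeta x)) has_integral Psi s2 - Psi s1) {s1..s2}"
  proof -
    have "((\<lambda>x. (lnQ x - ln x) * zeta' x) has_integral Psi s2 - Psi s1) {s1..s2}"
    proof (rule fundamental_theorem_of_calculus)
      show "(Psi has_vector_derivative (lnQ x - ln x) * zeta' x) (at x within {s1..s2})"
        if "x \<in> {s1..s2}" for x
        using that assms DERIV_Psi[of x] has_field_derivative_at_within
        by (auto simp: has_real_derivative_iff_has_vector_derivative[symmetric])
    qed (rule assms)
    then show ?thesis
      by (rule has_integral_eq[rotated]) (use assms g_zeta in auto)
  qed
  ultimately show ?thesis by (rule has_integral_unique)
qed

lemma continuous_on_Psi: "continuous_on {0..1} Psi"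
proof -
  have lnQ_ln: "continuous_on {0..1} (\<lambda>s. lnQ s * ln s)"
  proof (rule continuous_on_IccI)
    show "((\<lambda>s. lnQ s * ln s) \<longlongrightarrow> lnQ 0 * ln 0) (at_right 0)"
      unfolding lnQ_def by simp real_asymp
    show "((\<lambda>s. lnQ s * ln s) \<longlongrightarrow> lnQ 1 * ln 1) (at_left 1)"
      unfolding lnQ_def by simp real_asymp
    show "(\<lambda>s. lnQ s * ln s) \<midarrow>x\<rightarrow> lnQ x * ln x" if "0 < x" "x < 1" for x
      using that one_minus_add_square_pos[of x] unfolding lnQ_def
      by (intro continuous_intros isContD) auto
  qed simp
  have ln_ln: "continuous_on {0..1} (\<lambda>s::real. ln s * ln (1 - s))"
  proof (rule continuous_on_IccI)
    show "((\<lambda>s::real. ln s * ln (1 - s)) \<longlongrightarrow> ln 0 * ln (1 - 0)) (at_right 0)"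
      by simp real_asymp
    show "((\<lambda>s::real. ln s * ln (1 - s)) \<longlongrightarrow> ln 1 * ln (1 - 1)) (at_left 1)"
      by simp real_asymp
    show "(\<lambda>s. ln s * ln (1 - s)) \<midarrow>x\<rightarrow> ln x * ln (1 - x)" if "0 < x" "x < 1" for x :: real
      using that by (intro continuous_intros isContD) auto
  qed simp
  have lnQ: "continuous_on S lnQ" for S
    unfolding lnQ_def[abs_def] using one_minus_add_square_pos
    by (intro continuous_intros) (auto simp: less_le)
  have Li2: "continuous_on S (\<lambda>x. Li2 (f x))" if "continuous_on S f" "f ` S \<subseteq> {-1..1}" for S f
    using continuous_on_compose2[OF continuous_on_Li2 that] .
  have Phi: "continuous_on {0..1} Phi"
    unfolding Phi_def[abs_def]
    by (intro continuous_intros Li2) (auto simp: power_le_one order_trans[OF _ zero_le_power])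
  have Phi_one_minus: "continuous_on {0..1} (\<lambda>s. Phi (1 - s))"
    by (rule continuous_on_compose2[OF Phi]) (auto intro!: continuous_intros)
  show ?thesis unfolding Psi_def[abs_def]
    by (intro continuous_on_add continuous_on_diff continuous_intros lnQ lnQ_ln ln_ln Phi
        Phi_one_minus Li2) auto
qed

lemma Psi_1_minus_Psi_0: "Psi 1 - Psi 0 = pi\<^sup>2 / 18"
  unfolding Psi_def Phi_def lnQ_def by (simp add: Li2_1 Li2_minus_1)


lemma ln_ge_one_minus_inverse: "0 < x \<Longrightarrow> 1 - 1 / x \<le> ln (x::real)"
  using ln_le_minus_one[of "1 / x"] by (simp add: ln_div)

lemma exp_le_inverse_one_minus:
  assumes "x < 1"
  shows "exp x \<le> 1 / (1 - (x::real))"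
proof -
  have "1 - x \<le> exp (- x)" using exp_ge_add_one_self[of "- x"] by simp
  then have "(1 - x) * exp x \<le> 1" by (simp add: exp_minus field_simps)
  then show ?thesis using assms by (simp add: field_simps mult.commute)
qed

lemma zeta'_nonneg: "0 \<le> x \<Longrightarrow> x < 1 \<Longrightarrow> 0 \<le> zeta' x"
  unfolding zeta'_def using one_minus_add_square_pos[of x] by (auto intro!: divide_nonneg_pos)

lemma Psi_deriv_le_5:
  assumes "0 < x" "x < 1"
  shows "(lnQ x - ln x) * zeta' x \<le> 5"
proof -
  have d: "0 < 1 - x + x\<^sup>2" by (rule one_minus_add_square_pos)
  have "lnQ x - ln x = ln (1 + (1 - x)\<^sup>2 / x)"
  proof -
    have "1 + (1 - x)\<^sup>2 / x = (1 - x + x\<^sup>2) / x"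
      using assms by (simp add: field_simps power2_eq_square)
    then show ?thesis unfolding lnQ_def using assms d by (simp add: ln_div)
  qed
  also have "\<dots> \<le> (1 - x)\<^sup>2 / x"
    using ln_add_one_self_le_self[of "(1 - x)\<^sup>2 / x"] assms by auto
  finally have "(lnQ x - ln x) * zeta' x \<le> (1 - x)\<^sup>2 / x * zeta' x"
    using zeta'_nonneg[of x] assms by (intro mult_right_mono) auto
  also have "\<dots> = (1 - x) * (2 - x) / (1 - x + x\<^sup>2)"
  proof -
    have "y * y / x * (x * c / (d * y)) = y * c / d" if "x \<noteq> 0" "y \<noteq> 0" "d \<noteq> 0" for y c d
      using that by (simp add: field_simps)
    then show ?thesis
      unfolding zeta'_def power2_eq_square[of "1 - x"] using assms d by simp
  qed
  also have "\<dots> \<le> 5"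
  proof -
    have "x * x \<le> x * 1" using assms by (intro mult_left_mono) auto
    then have "(1 - x) * (2 - x) \<le> 2" using assms by (simp add: algebra_simps)
    also have "2 \<le> 5 * (1 - x + x\<^sup>2)" using zero_le_power2[of "x - 1/2"]
      by (simp add: power2_eq_square algebra_simps)
    finally show ?thesis using d by (simp add: divide_le_eq)
  qed
  finally show ?thesis .
qed

lemma Psi_deriv_le_near_0:
  assumes "0 < x" "x \<le> 0.7"
  shows "(lnQ x - ln x) * zeta' x \<le> - 10 * x * ln x"
proof -
  have "(lnQ x - ln x) * zeta' x \<le> (- ln x) * zeta' x"
    using lnQ_nonpos[of x] zeta'_nonneg[of x] assms by (intro mult_right_mono) auto
  also have "\<dots> \<le> (- ln x) * (10 * x)"
  proof (rule mult_left_mono)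
    have "1 - x + x\<^sup>2 \<ge> 3/4"
      using zero_le_power2[of "x - 1/2"] by (simp add: power2_eq_square algebra_simps)
    moreover have "1 - x \<ge> 0.3" using assms by simp
    ultimately have "(1 - x + x\<^sup>2) * (1 - x) \<ge> (3/4) * 0.3" by (intro mult_mono) auto
    then have "zeta' x \<le> x * 2 / 0.225"
      unfolding zeta'_def using assms by (intro frac_le mult_left_mono) auto
    then show "zeta' x \<le> 10 * x" using assms by simp
  qed (use assms in simp)
  finally show ?thesis by (simp add: algebra_simps)
qed

lemma Psi_1_minus_le:
  assumes "0 < s" "s < 1"
  shows "Psi 1 - Psi s \<le> 5 * (1 - s)"
proof -
  have "continuous_on {s..1} Psi"
    by (rule continuous_on_subset[OF continuous_on_Psi]) (use assms in auto)
  then obtain l z where z: "s < z" "z < 1" "DERIV Psi z :> l" "Psi 1 - Psi s = (1 - s) * l"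
    using MVT[OF assms(2)] assms DERIV_Psi by (metis real_differentiable_def order_less_trans)
  have "l = (lnQ z - ln z) * zeta' z" using DERIV_unique[OF z(3) DERIV_Psi] z assms by auto
  then have "l \<le> 5" using Psi_deriv_le_5[of z] z assms by auto
  then have "(1 - s) * l \<le> (1 - s) * 5" using assms by (intro mult_left_mono) auto
  then show ?thesis using z(4) by simp
qed

lemma Psi_minus_Psi_0_le:
  assumes "0 < s" "s \<le> 0.7"
  shows "Psi s - Psi 0 \<le> 5/2 * s\<^sup>2 - 5 * s\<^sup>2 * ln s"
proof -
  define K where "K x = 5/2 * x\<^sup>2 - 5 * x\<^sup>2 * ln x" for x :: real
  define R where "R x = Psi x - K x" for x
  have K_cont: "continuous_on {0..1} K"
  proof (rule continuous_on_IccI)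
    show "(K \<longlongrightarrow> K 0) (at_right 0)" "(K \<longlongrightarrow> K 1) (at_left 1)"
      unfolding K_def[abs_def] by simp_all real_asymp+
    show "K \<midarrow>x\<rightarrow> K x" if "0 < x" "x < 1" for x
      unfolding K_def[abs_def] using that by (intro continuous_intros isContD) auto
  qed simp
  have "continuous_on {0..s} R"
    unfolding R_def[abs_def] using assms
    by (intro continuous_on_diff continuous_on_subset[OF continuous_on_Psi]
        continuous_on_subset[OF K_cont]) auto
  moreover have dR: "(R has_real_derivative (lnQ x - ln x) * zeta' x - (- 10 * x * ln x)) (at x)"
    if "0 < x" "x < s" for x
    unfolding R_def[abs_def] K_def using that assms
    by (intro DERIV_diff DERIV_Psi) (auto intro!: derivative_eq_intros simp: field_simps power2_eq_square)
  ultimately obtain l z where z: "0 < z" "z < s" "DERIV R z :> l" "R s - R 0 = (s - 0) * l"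
    using MVT[OF assms(1)] by (metis real_differentiable_def)
  have "l = (lnQ z - ln z) * zeta' z - (- 10 * z * ln z)" using DERIV_unique[OF z(3) dR] z by auto
  then have "l \<le> 0" using Psi_deriv_le_near_0[of z] z assms by auto
  then have "R s - R 0 \<le> 0" using z(4) assms by (simp add: mult_nonneg_nonpos)
  then show ?thesis unfolding R_def K_def by simp
qed


lemma zeta_surj:
  assumes "0 < z"
  obtains s where "0 < s" "s < 1" "zeta s = z"
proof -
  define t where "t = 1 - exp (- z) / 2"
  have "exp (- z) < 1" using assms by simp
  then have t: "0 < t" "t < 1" unfolding t_def using exp_gt_zero[of "- z"] by linarith+
  have "ln (1 - t) = - z - ln 2"
    unfolding t_def by (simp add: ln_div)
  moreover have "lnQ t \<ge> ln (3/4)"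
    using zero_le_power2[of "t - 1/2"] unfolding lnQ_def by (simp add: power2_eq_square algebra_simps)
  moreover have "0 \<le> ln (3/4) + ln (2 :: real)"
    using ln_mult[of "3/4" "2::real"] ln_ge_zero[of "3/2::real"] by simp
  ultimately have "z \<le> zeta t"
    unfolding zeta_def by simp
  then obtain s where s: "0 \<le> s" "s \<le> t" "zeta s = z"
    using IVT'[of zeta 0 z t] continuous_on_zeta[of t] t assms by force
  with assms have "s \<noteq> 0" by auto
  show thesis by (rule that[of s]) (use s t \<open>s \<noteq> 0\<close> in auto)
qed

lemma one_minus_le_exp_minus_zeta:
  assumes "0 \<le> s" "s < 1"
  shows "1 - s \<le> exp (- zeta s)"
proof -
  have "ln (1 - s) \<le> - zeta s"
    unfolding zeta_def using lnQ_nonpos[of s] assms by simp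
  then show ?thesis using assms by (metis exp_le_cancel_iff exp_ln diff_gt_0_iff_gt)
qed

lemma Psi_minus_Psi_0_le_zeta:
  assumes "0 < s" "s \<le> 0.7" "zeta s \<le> 1/2"
  shows "Psi s - Psi 0 \<le> 5 * zeta s * (10/3 - ln (zeta s))"
proof -
  define a where "a = zeta s"
  have a: "0 < a" "a \<le> 1/2" unfolding a_def using zeta_pos[of s] assms by auto
  have e: "s\<^sup>2 / (1 - s) = exp a - 1"
  proof -
    have "0 < 1 + s\<^sup>2 / (1 - s)" using assms by (intro add_pos_nonneg) auto
    moreover have "a = ln (1 + s\<^sup>2 / (1 - s))"
      unfolding a_def using zeta_eq_ln assms by simp
    ultimately have "1 + s\<^sup>2 / (1 - s) = exp a" by simp
    then show ?thesis by simp
  qed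
  have "s\<^sup>2 \<le> s\<^sup>2 / (1 - s)" using assms by (simp add: le_divide_eq)
  also have "\<dots> \<le> 1 / (1 - a) - 1" unfolding e using exp_le_inverse_one_minus[of a] a by simp
  also have "\<dots> \<le> 2 * a" using a by (simp add: field_simps)
  finally have s_hi: "s\<^sup>2 \<le> 2 * a" .
  have "a \<le> exp a - 1" using exp_ge_add_one_self[of a] by linarith
  then have "a * (3/10) \<le> (exp a - 1) * (1 - s)"
    using a assms by (intro mult_mono) auto
  also have "\<dots> = s\<^sup>2" using e assms by (simp add: field_simps)
  finally have s_lo: "3/10 * a \<le> s\<^sup>2" by simp
  have "ln (3/10 * a) \<le> ln (s\<^sup>2)" using s_lo a assms by simp
  moreover have "ln (3/10 * a) = ln (3/10) + ln a" by (rule ln_mult_pos) (use a in auto)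
  moreover have "ln (s\<^sup>2) = 2 * ln s" using assms by (simp add: ln_realpow)
  ultimately have "ln (3/10) + ln a \<le> 2 * ln s" by linarith
  moreover have "- (7/3) \<le> ln (3/10 :: real)"
    using ln_ge_one_minus_inverse[of "3/10"] by simp
  ultimately have ln_s: "- ln s \<le> 7/6 - ln a / 2" by linarith
  have "0 \<le> - ln s" using assms by simp
  have "Psi s - Psi 0 \<le> 5/2 * s\<^sup>2 + 5 * s\<^sup>2 * (- ln s)"
    using Psi_minus_Psi_0_le[OF assms(1,2)] by simp
  also have "\<dots> \<le> 5/2 * (2 * a) + 5 * (2 * a) * (7/6 - ln a / 2)"
    using s_hi ln_s \<open>0 \<le> - ln s\<close> a by (intro add_mono mult_left_mono mult_mono) auto
  also have "\<dots> = 5 * a * (10/3 - ln a)" by (simp add: algebra_simps)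
  finally show ?thesis unfolding a_def .
qed

lemma ceiling_inverse_sqrt_times_bounds:
  fixes q :: real
  assumes "0 < q"
  shows "sqrt q \<le> of_int \<lceil>1 / sqrt q\<rceil> * q" "of_int \<lceil>1 / sqrt q\<rceil> * q \<le> sqrt q + q"
proof -
  have "1 / sqrt q * q = sqrt q" using assms by (simp add: field_simps)
  moreover have "(1 / sqrt q + 1) * q = sqrt q + q" using assms by (simp add: field_simps)
  moreover have "1 / sqrt q \<le> of_int \<lceil>1 / sqrt q\<rceil>" "of_int \<lceil>1 / sqrt q\<rceil> \<le> 1 / sqrt q + 1"
    by linarith+
  ultimately show "sqrt q \<le> of_int \<lceil>1 / sqrt q\<rceil> * q" "of_int \<lceil>1 / sqrt q\<rceil> * q \<le> sqrt q + q"
    using assms by (metis mult_right_mono less_imp_le)+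
qed

lemma floor_divide_times_gt:
  fixes q x :: real
  assumes "0 < q"
  shows "x - q < of_int \<lfloor>(1 / q) * x\<rfloor> * q"
proof -
  have "((1 / q) * x - 1) * q < of_int \<lfloor>(1 / q) * x\<rfloor> * q"
    using assms by (intro mult_strict_right_mono) linarith+
  moreover have "((1 / q) * x - 1) * q = x - q" using assms by (simp add: field_simps)
  ultimately show ?thesis by simp
qed


lemma exp_minus_floor_le:
  fixes q :: real
  assumes "0 < q" "q < 1"
  shows "exp (- (of_int \<lfloor>(1 / q) * ln (1 / q)\<rfloor> * q)) \<le> q / (1 - q)"
proof -
  have "exp (- (of_int \<lfloor>(1 / q) * ln (1 / q)\<rfloor> * q)) \<le> exp (q - ln (1 / q))"
    using floor_divide_times_gt[OF assms(1), of "ln (1 / q)"] by simp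
  also have "\<dots> = exp q * q" using assms by (simp add: exp_diff)
  also have "\<dots> \<le> 1 / (1 - q) * q"
    using exp_le_inverse_one_minus[OF assms(2)] assms by (intro mult_right_mono) auto
  finally show ?thesis by simp
qed

lemma zeta_seven_tenths_ge: "4/9 \<le> zeta 0.7"
proof -
  have "zeta 0.7 = ln (79/30)" using zeta_eq_ln[of "0.7"] by (simp add: power2_eq_square)
  moreover have "1 - 1 / (79/30) \<le> ln (79/30 :: real)" by (rule ln_ge_one_minus_inverse) simp
  ultimately show ?thesis by simp
qed

lemma one_le_ln_inverse:
  fixes q :: real
  assumes "0 < q" "q \<le> 1/3"
  shows "1 \<le> ln (1 / q)"
proof -
  have "q * exp 1 \<le> q * 3" using exp_le assms by (intro mult_left_mono) auto
  then have "q * exp 1 \<le> 1" using assms by linarith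
  then have "exp 1 \<le> 1 / q" using assms by (simp add: field_simps)
  then show ?thesis using assms by (simp add: ln_ge_iff)
qed

lemma Psi_minus_Psi_0_le_sqrt:
  fixes q s :: real
  assumes q: "0 < q" "q < 1/9" and s: "0 < s" "s \<le> 0.7"
    and zeta_s: "sqrt q \<le> zeta s" "zeta s \<le> 4/3 * sqrt q"
  shows "Psi s - Psi 0 \<le> 27 * sqrt q * ln (1 / q)"
proof -
  define a where "a = zeta s"
  define l where "l = ln (1 / q)"
  have l: "1 \<le> l" unfolding l_def using one_le_ln_inverse q by simp
  have "0 < sqrt q" "sqrt q < 1/3"
    using q real_sqrt_less_iff[of q "1/9"] real_sqrt_divide[of 1 9] by auto
  then have a: "0 < a" "a \<le> 1/2" using zeta_s unfolding a_def by linarith+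
  have "ln (sqrt q) \<le> ln a" using zeta_s q unfolding a_def by (intro ln_mono) auto
  moreover have "ln (sqrt q) = - l / 2" unfolding l_def using q by (simp add: ln_sqrt ln_div)
  moreover have "ln a \<le> 0" using a by simp
  ultimately have "10/3 - ln a \<le> 10/3 + l / 2" "0 \<le> 10/3 - ln a" by linarith+
  then have "5 * a * (10/3 - ln a) \<le> 5 * (4/3 * sqrt q) * (10/3 + l / 2)"
    using zeta_s a q unfolding a_def by (intro mult_mono) auto
  also have "\<dots> = 200/9 * sqrt q + 10/3 * (sqrt q * l)" by (simp add: algebra_simps)
  also have "\<dots> \<le> 27 * sqrt q * l"
  proof -
    have "sqrt q \<le> sqrt q * l" using l q by (simp add: mult_le_cancel_left1)
    then show ?thesis using \<open>0 < sqrt q\<close> unfolding mult.assoc by linarith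
  qed
  finally show ?thesis
    using Psi_minus_Psi_0_le_zeta[OF s] a unfolding a_def l_def by simp
qed

lemma Psi_1_minus_Psi_le_q:
  fixes q s :: real
  assumes q: "0 < q" "q < 1/9" and s: "0 < s" "s < 1"
    and zeta_s: "zeta s = of_int \<lfloor>(1 / q) * ln (1 / q)\<rfloor> * q"
  shows "Psi 1 - Psi s \<le> 6 * q"
proof -
  have "1 - s \<le> q / (1 - q)"
    using one_minus_le_exp_minus_zeta[of s] exp_minus_floor_le[of q] s q zeta_s by simp
  then have "Psi 1 - Psi s \<le> 5 * (q / (1 - q))"
    using Psi_1_minus_le[OF s] by simp
  also have "\<dots> \<le> 6 * q" using q by (simp add: field_simps)
  finally show ?thesis .
qed

lemma integral_g_lower_bound:
  fixes q :: real
  assumes q: "0 < q" "q < 1/9"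
  shows "pi\<^sup>2 / 18 - 33 * sqrt q * ln (1 / q)
    \<le> integral {of_int \<lceil>1 / sqrt q\<rceil> * q .. of_int \<lfloor>(1 / q) * ln (1 / q)\<rfloor> * q} g"
proof -
  define a where "a = of_int \<lceil>1 / sqrt q\<rceil> * q"
  define b where "b = of_int \<lfloor>(1 / q) * ln (1 / q)\<rfloor> * q"
  have l: "1 \<le> ln (1 / q)" using one_le_ln_inverse q by simp
  have s: "0 < sqrt q" "sqrt q < 1/3"
    using q real_sqrt_less_iff[of q "1/9"] real_sqrt_divide[of 1 9] by auto
  have "sqrt q * sqrt q \<le> sqrt q * (1/3)" using s by (intro mult_left_mono) auto
  then have "q \<le> sqrt q / 3" using q by simp
  then have a: "sqrt q \<le> a" "a \<le> 4/3 * sqrt q"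
    using ceiling_inverse_sqrt_times_bounds[OF q(1)] unfolding a_def by auto
  have "a < b"
    using floor_divide_times_gt[OF q(1), of "ln (1 / q)"] a s l q unfolding b_def by simp
  obtain sa where sa: "0 < sa" "sa < 1" "zeta sa = a"
    using zeta_surj[of a] a s by auto
  obtain sb where sb: "0 < sb" "sb < 1" "zeta sb = b"
    using zeta_surj[of b] a s \<open>a < b\<close> by auto
  have "sa \<le> 0.7"
    using zeta_le_iff[of sa "0.7"] zeta_seven_tenths_ge sa a s by simp
  have "sa \<le> sb" using zeta_le_iff[of sa sb] sa sb \<open>a < b\<close> by simp
  have "sqrt q \<le> sqrt q * ln (1 / q)" using l q by (simp add: mult_le_cancel_left1)
  then have "q \<le> sqrt q * ln (1 / q)" using \<open>q \<le> sqrt q / 3\<close> s by linarith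
  then have "Psi 1 - Psi sb \<le> 6 * sqrt q * ln (1 / q)"
    using Psi_1_minus_Psi_le_q[OF q sb(1,2)] sb unfolding b_def by simp
  moreover have "Psi sa - Psi 0 \<le> 27 * sqrt q * ln (1 / q)"
    using Psi_minus_Psi_0_le_sqrt[OF q sa(1) \<open>sa \<le> 0.7\<close>] sa a by simp
  moreover have "integral {a..b} g = Psi sb - Psi sa"
    using integral_g_zeta[of sa sb] sa sb \<open>sa \<le> sb\<close> by simp
  ultimately show ?thesis
    using Psi_1_minus_Psi_0 unfolding a_def b_def by simp
qed

theorem lemma9:
  shows "\<exists>C1::real. \<forall>p::real. 0 < p \<and> p < 0.1 \<longrightarrow>
    (let q = - ln (1 - p);
         A = \<lceil>1 / sqrt q\<rceil>;
         B = \<lfloor>(1 / q) * ln (1 / q)\<rfloor>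
     in integral {of_int A * q .. of_int B * q} g \<ge> pi\<^sup>2 / 18 - C1 * sqrt q * ln (1 / q))"
proof (intro exI[of _ 33] allI impI)
  fix p :: real
  assume p: "0 < p \<and> p < 0.1"
  have "1 - 1 / (1 - p) \<le> ln (1 - p)" using p by (intro ln_ge_one_minus_inverse) auto
  moreover have "- (1/9) < 1 - 1 / (1 - p)" using p by (simp add: field_simps)
  ultimately have "- ln (1 - p) < 1/9" by linarith
  moreover have "0 < - ln (1 - p)" using p by simp
  ultimately show "let q = - ln (1 - p); A = \<lceil>1 / sqrt q\<rceil>; B = \<lfloor>(1 / q) * ln (1 / q)\<rfloor>
     in integral {of_int A * q .. of_int B * q} g \<ge> pi\<^sup>2 / 18 - 33 * sqrt q * ln (1 / q)"
    unfolding Let_def using integral_g_lower_bound by blast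
qed

end
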